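(* Let $\{M_p\mid p\in P\}$ be a Morse decomposition of a multivector field on a finite simplicial complex $K$, and let $S$ and $S'$ be the matrices output by ConMat on the filtered boundary matrices $A$ and $A'$ of two Morse fixed admissible enumerations of $K$. Then there exists a permutation matrix $R$ such that $R^{T}SR=S'$.
   Context: $K$ is a finite simplicial complex ($\tau\le\sigma$: $\tau$ is a face of $\sigma$; $\mathrm{cl}(\sigma)=\{\tau:\tau\le\sigma\}$). A multivector field $\mathcal V$ on $K$ is a partition of $K$ into convex sets $V$ (if $\sigma,\tau\in V$ and $\sigma\le\mu\le\tau$ then $\mu\in V$); $[\sigma]_{\mathcal V}$ is the part containing $\sigma$, $F_{\mathcal V}(\sigma)=[\sigma]_{\mathcal V}\cup\mathrm{cl}(\sigma)$, and a path is a sequence $\sigma_1,\dots,\sigma_r$ with $\sigma_k\in F_{\mathcal V}(\sigma_{k-1})$. A Morse decomposition indexed by a finite poset $(P,\le_P)$ is a partition $K=\bigsqcup_{p\in P}M_p$ such that every path from $M_p$ to $M_q$ has $q\le_P p$; $[\sigma]_P$ is the $p$ with $\sigma\in M_p$. An admissible enumeration is $\sigma_1,\dots,\sigma_n$ of all simplices of $K$ such that (a) for some linear extension $\le_{lin}$ of $\le_P$, $i\le j\Rightarrow[\sigma_i]_P\le_{lin}[\sigma_j]_P$; (b) if $\sigma_i$ is a proper face of $\sigma_j$ then $i<j$. Two admissible enumerations are Morse fixed if for every $p$ they induce the same order on $M_p$. The filtered boundary matrix is the $n\times n$ $\mathbb Z_2$-matrix with entry $(i,j)$ equal to $1$ iff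 $\sigma_i$ is a codimension-one face of $\sigma_j$. For a nonzero column $j$ of a matrix $B$, $\mathrm{low}_B(j)$ is the largest $i$ with $B[i,j]=1$. Column (and row) $j$ is homogeneous if nonzero and $\sigma_j$, $\sigma_{\mathrm{low}_B(j)}$ are in the same Morse set; then index $\mathrm{low}_B(j)$ is targetable. $J_h(B)$, $J_t(B)$: sets of homogeneous, targetable indices. Algorithm ConMat on $A$ (in place): for $j=1,\dots,n$: for $i=\mathrm{low}_A(j)$ down to $1$: if $A[i,j]=1$ and some column $s<j$ of the current matrix is homogeneous with $\mathrm{low}_A(s)=i$, add column $s$ to column $j$ (mod 2). With $A_{out}$ the result, let $J=\{1,\dots,n\}\setminus J_h(A_{out})\setminus J_t(A_{out})$; the output is the submatrix of $A_{out}$ on rows and columns in $J$ (in their original order). *)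

theory Defs
  imports "Jordan_Normal_Form.Matrix" "HOL-Library.Z2" "HOL-Library.Disjoint_Sets"
          "HOL-Combinatorics.Permutations"
begin

definition simplicial_complex :: "'v set set \<Rightarrow> bool" where
  "simplicial_complex K \<longleftrightarrow> finite K \<and>
     (\<forall>\<sigma>\<in>K. finite \<sigma> \<and> \<sigma> \<noteq> {} \<and> (\<forall>\<tau>. \<tau> \<subseteq> \<sigma> \<and> \<tau> \<noteq> {} \<longrightarrow> \<tau> \<in> K))"

definition closure_sc :: "'v set set \<Rightarrow> 'v set \<Rightarrow> 'v set set" where
  "closure_sc K \<sigma> = {\<tau> \<in> K. \<tau> \<subseteq> \<sigma>}"

definition codim1_face :: "'v set \<Rightarrow> 'v set \<Rightarrow> bool" where
  "codim1_face \<tau> \<sigma> \<longleftrightarrow> \<tau> \<subseteq> \<sigma> \<and> card \<sigma> = card \<tau> + 1"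

definition convex_sc :: "'v set set \<Rightarrow> 'v set set \<Rightarrow> bool" where
  "convex_sc K V \<longleftrightarrow> (\<forall>\<sigma>\<in>V. \<forall>\<tau>\<in>V. \<forall>\<mu>\<in>K. \<sigma> \<subseteq> \<mu> \<and> \<mu> \<subseteq> \<tau> \<longrightarrow> \<mu> \<in> V)"

definition multivector_field :: "'v set set \<Rightarrow> 'v set set set \<Rightarrow> bool" where
  "multivector_field K \<V> \<longleftrightarrow> partition_on K \<V> \<and> (\<forall>V\<in>\<V>. convex_sc K V)"

definition mv_class :: "'v set set set \<Rightarrow> 'v set \<Rightarrow> 'v set set" where
  "mv_class \<V> \<sigma> = (THE V. V \<in> \<V> \<and> \<sigma> \<in> V)"

definition F_mv :: "'v set set \<Rightarrow> 'v set set set \<Rightarrow> 'v set \<Rightarrow> 'v set set" where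
  "F_mv K \<V> \<sigma> = mv_class \<V> \<sigma> \<union> closure_sc K \<sigma>"

definition is_path :: "'v set set \<Rightarrow> 'v set set set \<Rightarrow> 'v set list \<Rightarrow> bool" where
  "is_path K \<V> ps \<longleftrightarrow> ps \<noteq> [] \<and> hd ps \<in> K \<and>
     (\<forall>k. Suc k < length ps \<longrightarrow> ps ! Suc k \<in> F_mv K \<V> (ps ! k))"

definition partial_order_pred :: "'p set \<Rightarrow> ('p \<Rightarrow> 'p \<Rightarrow> bool) \<Rightarrow> bool" where
  "partial_order_pred P leP \<longleftrightarrow>
     (\<forall>p\<in>P. leP p p) \<and>
     (\<forall>p\<in>P. \<forall>q\<in>P. leP p q \<and> leP q p \<longrightarrow> p = q) \<and>
     (\<forall>p\<in>P. \<forall>q\<in>P. \<forall>r\<in>P. leP p q \<and> leP q r \<longrightarrow> leP p r)"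

definition linear_extension :: "'p set \<Rightarrow> ('p \<Rightarrow> 'p \<Rightarrow> bool) \<Rightarrow> ('p \<Rightarrow> 'p \<Rightarrow> bool) \<Rightarrow> bool" where
  "linear_extension P leP lin \<longleftrightarrow> partial_order_pred P lin \<and>
     (\<forall>p\<in>P. \<forall>q\<in>P. lin p q \<or> lin q p) \<and>
     (\<forall>p\<in>P. \<forall>q\<in>P. leP p q \<longrightarrow> lin p q)"

definition morse_decomposition ::
  "'v set set \<Rightarrow> 'v set set set \<Rightarrow> 'p set \<Rightarrow> ('p \<Rightarrow> 'p \<Rightarrow> bool) \<Rightarrow> ('p \<Rightarrow> 'v set set) \<Rightarrow> bool" where
  "morse_decomposition K \<V> P leP M \<longleftrightarrow>
     finite P \<and> partial_order_pred P leP \<and>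
     (\<forall>p\<in>P. M p \<subseteq> K) \<and> (\<Union>p\<in>P. M p) = K \<and>
     (\<forall>p\<in>P. \<forall>q\<in>P. p \<noteq> q \<longrightarrow> M p \<inter> M q = {}) \<and>
     (\<forall>ps p q. is_path K \<V> ps \<and> p \<in> P \<and> q \<in> P \<and> hd ps \<in> M p \<and> last ps \<in> M q \<longrightarrow> leP q p)"

definition morse_index :: "'p set \<Rightarrow> ('p \<Rightarrow> 'v set set) \<Rightarrow> 'v set \<Rightarrow> 'p" where
  "morse_index P M \<sigma> = (THE p. p \<in> P \<and> \<sigma> \<in> M p)"

section \<open>Admissible enumerations (0-based lists)\<close>

definition enumeration :: "'v set set \<Rightarrow> 'v set list \<Rightarrow> bool" where
  "enumeration K e \<longleftrightarrow> distinct e \<and> set e = K"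

definition admissible_enum ::
  "'v set set \<Rightarrow> 'p set \<Rightarrow> ('p \<Rightarrow> 'p \<Rightarrow> bool) \<Rightarrow> ('p \<Rightarrow> 'v set set) \<Rightarrow> 'v set list \<Rightarrow> bool" where
  "admissible_enum K P leP M e \<longleftrightarrow> enumeration K e \<and>
     (\<exists>lin. linear_extension P leP lin \<and>
        (\<forall>i j. i \<le> j \<and> j < length e \<longrightarrow>
           lin (morse_index P M (e ! i)) (morse_index P M (e ! j)))) \<and>
     (\<forall>i j. i < length e \<and> j < length e \<and> e ! i \<subset> e ! j \<longrightarrow> i < j)"

definition morse_fixed ::
  "'p set \<Rightarrow> ('p \<Rightarrow> 'v set set) \<Rightarrow> 'v set list \<Rightarrow> 'v set list \<Rightarrow> bool" where
  "morse_fixed P M e e' \<longleftrightarrow>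
     (\<forall>p\<in>P. \<forall>i j i' j'. i < length e \<and> j < length e \<and> i' < length e' \<and> j' < length e' \<and>
        e ! i \<in> M p \<and> e ! j \<in> M p \<and> e ! i = e' ! i' \<and> e ! j = e' ! j' \<longrightarrow>
        (i < j \<longleftrightarrow> i' < j'))"

definition boundary_matrix :: "'v set list \<Rightarrow> bit mat" where
  "boundary_matrix e = mat (length e) (length e)
     (\<lambda>(i, j). if codim1_face (e ! i) (e ! j) then 1 else 0)"

text \<open>m k is the Morse set index of the k-th simplex.\<close>

definition nz_col :: "bit mat \<Rightarrow> nat \<Rightarrow> bool" where
  "nz_col A j \<longleftrightarrow> (\<exists>i < dim_row A. A $$ (i, j) \<noteq> 0)"

definition low :: "bit mat \<Rightarrow> nat \<Rightarrow> nat" where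
  "low A j = Max {i. i < dim_row A \<and> A $$ (i, j) \<noteq> 0}"

definition homogeneous :: "(nat \<Rightarrow> 'p) \<Rightarrow> bit mat \<Rightarrow> nat \<Rightarrow> bool" where
  "homogeneous m A j \<longleftrightarrow> nz_col A j \<and> m j = m (low A j)"

definition targetable :: "(nat \<Rightarrow> 'p) \<Rightarrow> bit mat \<Rightarrow> nat \<Rightarrow> bool" where
  "targetable m A i \<longleftrightarrow> (\<exists>j < dim_col A. homogeneous m A j \<and> low A j = i)"

definition add_col :: "bit mat \<Rightarrow> nat \<Rightarrow> nat \<Rightarrow> bit mat" where
  "add_col A s j = mat (dim_row A) (dim_col A)
     (\<lambda>(r, c). if c = j then A $$ (r, j) + A $$ (r, s) else A $$ (r, c))"

definition conmat_step :: "(nat \<Rightarrow> 'p) \<Rightarrow> nat \<Rightarrow> nat \<Rightarrow> bit mat \<Rightarrow> bit mat" where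
  "conmat_step m j i A =
     (if A $$ (i, j) = 1 \<and> (\<exists>s < j. homogeneous m A s \<and> low A s = i)
      then add_col A (LEAST s. s < j \<and> homogeneous m A s \<and> low A s = i) j
      else A)"

definition conmat_col :: "(nat \<Rightarrow> 'p) \<Rightarrow> nat \<Rightarrow> bit mat \<Rightarrow> bit mat" where
  "conmat_col m j A =
     (if nz_col A j then fold (conmat_step m j) (rev [0..<Suc (low A j)]) A else A)"

definition conmat_reduce :: "(nat \<Rightarrow> 'p) \<Rightarrow> bit mat \<Rightarrow> bit mat" where
  "conmat_reduce m A = fold (conmat_col m) [0..<dim_col A] A"

definition conmat :: "(nat \<Rightarrow> 'p) \<Rightarrow> bit mat \<Rightarrow> bit mat" where
  "conmat m A =
     (let B = conmat_reduce m A;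
          js = sorted_list_of_set
                 {k. k < dim_col A \<and> \<not> homogeneous m B k \<and> \<not> targetable m B k}
      in mat (length js) (length js) (\<lambda>(a, b). B $$ (js ! a, js ! b)))"

definition conmat_of_enum :: "'p set \<Rightarrow> ('p \<Rightarrow> 'v set set) \<Rightarrow> 'v set list \<Rightarrow> bit mat" where
  "conmat_of_enum P M e = conmat (\<lambda>k. morse_index P M (e ! k)) (boundary_matrix e)"

definition permutation_matrix :: "bit mat \<Rightarrow> bool" where
  "permutation_matrix R \<longleftrightarrow> (\<exists>n \<pi>. R \<in> carrier_mat n n \<and> \<pi> permutes {..<n} \<and>
     R = mat n n (\<lambda>(i, j). if i = \<pi> j then 1 else 0))"

end

theory Submission
  imports Defs
begin

text \<open>
  ConMat adds to each column only earlier homogeneous columns, so its output B is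
  characterised column by column: B_j is A_j plus a sum of earlier homogeneous columns of B
  whose Morse sets lie below that of j, and B_j vanishes at the low of every earlier
  homogeneous column. The lows of the homogeneous columns of such a B are pairwise distinct,
  so comparing two candidates at the largest low where they could differ shows that these
  properties determine B.

  Passing to a Morse fixed enumeration conjugates A by the reindexing permutation \<pi>, and \<pi>
  preserves the order of any two indices with comparable Morse sets: inside one Morse set
  because the enumerations are Morse fixed, across Morse sets because both are admissible.
  All nonzero entries of A and B link comparable Morse sets, so \<pi> carries homogeneous
  columns to homogeneous columns and lows to lows. Hence the conjugate of B satisfies the
  characterisation for the conjugate of A and is its ConMat reduction; the kept index sets
  correspond under \<pi>, and the output matrices differ by the permutation that reorders them.
\<close>

text \<open>Keep + and * on bit in ring form instead of rewriting them to xor and and.\<close>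

declare add_bit_eq_xor [simp del] mult_bit_eq_and [simp del]

lemma bit_add_eq_0_iff: "x + y = (0::bit) \<longleftrightarrow> x = y"
  by (cases x; cases y) simp_all

lemma bit_add_cancel_left: "(c + a) + (c + b) = a + (b::bit)"
  by (cases a; cases b; cases c) simp_all

lemma sum_bit_symdiff:
  fixes f :: "'a \<Rightarrow> bit"
  assumes "finite S" "finite T"
  shows "sum f S + sum f T = sum f (sym_diff S T)"
proof -
  have "sum f S = sum f (S \<inter> T) + sum f (S - T)" by (rule sum.Int_Diff[OF assms(1)])
  moreover have "sum f T = sum f (S \<inter> T) + sum f (T - S)"
    unfolding Int_commute[of S T] by (rule sum.Int_Diff[OF assms(2)])
  moreover have "sum f (sym_diff S T) = sum f (S - T) + sum f (T - S)"
    using assms by (intro sum.union_disjoint) auto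
  ultimately show ?thesis by (simp only: bit_add_cancel_left)
qed

lemma le_low: "i < dim_row X \<Longrightarrow> X $$ (i, j) \<noteq> 0 \<Longrightarrow> i \<le> low X j"
  unfolding low_def by (rule Max_ge) auto

lemma zero_below_low: "low X j < i \<Longrightarrow> i < dim_row X \<Longrightarrow> X $$ (i, j) = 0"
  using le_low by fastforce

lemma low_in_column:
  assumes "nz_col X j"
  shows "low X j < dim_row X" "X $$ (low X j, j) = 1"
proof -
  have "low X j \<in> {i. i < dim_row X \<and> X $$ (i, j) \<noteq> 0}"
    unfolding low_def using assms unfolding nz_col_def by (intro Max_in) auto
  then show "low X j < dim_row X" "X $$ (low X j, j) = 1" by auto
qed

lemma low_eqI:
  assumes "a < dim_row X" "X $$ (a, j) \<noteq> 0" "\<And>i. i < dim_row X \<Longrightarrow> X $$ (i, j) \<noteq> 0 \<Longrightarrow> i \<le> a"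
  shows "low X j = a"
  unfolding low_def using assms by (intro Max_eqI) auto

lemma column_cong:
  assumes "dim_row X = dim_row Y" "\<And>i. i < dim_row X \<Longrightarrow> X $$ (i, s) = Y $$ (i, s)"
  shows "nz_col X s = nz_col Y s" "low X s = low Y s" "homogeneous m X s = homogeneous m Y s"
proof -
  show nz: "nz_col X s = nz_col Y s" unfolding nz_col_def using assms by auto
  have "{i. i < dim_row X \<and> X $$ (i, s) \<noteq> 0} = {i. i < dim_row Y \<and> Y $$ (i, s) \<noteq> 0}"
    using assms by auto
  then show lw: "low X s = low Y s" unfolding low_def by simp
  show "homogeneous m X s = homogeneous m Y s" unfolding homogeneous_def nz lw ..
qed

lemma add_col_index:
  "r < dim_row C \<Longrightarrow> c < dim_col C \<Longrightarrow>
     add_col C s j $$ (r, c) = (if c = j then C $$ (r, j) + C $$ (r, s) else C $$ (r, c))"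
  "dim_row (add_col C s j) = dim_row C" "dim_col (add_col C s j) = dim_col C"
  unfolding add_col_def by simp_all

section \<open>The loop invariant of ConMat\<close>

definition respects_order :: "(nat \<Rightarrow> 'p) \<Rightarrow> ('p \<Rightarrow> 'p \<Rightarrow> bool) \<Rightarrow> bit mat \<Rightarrow> bool" where
  "respects_order m R A \<longleftrightarrow> (\<forall>i < dim_row A. \<forall>j < dim_col A. A $$ (i, j) \<noteq> 0 \<longrightarrow> R (m i) (m j))"

lemma respects_orderD:
  "respects_order m R A \<Longrightarrow> A \<in> carrier_mat n n \<Longrightarrow> i < n \<Longrightarrow> j < n \<Longrightarrow> A $$ (i, j) \<noteq> 0 \<Longrightarrow>
     R (m i) (m j)"
  unfolding respects_order_def by auto

text \<open>The state of ConMat while it processes column j of X, once the rows with index at least t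
  have been handled (the inner loop runs downwards from the low of column j).\<close>

definition partially_reduced ::
  "(nat \<Rightarrow> 'p) \<Rightarrow> ('p \<Rightarrow> 'p \<Rightarrow> bool) \<Rightarrow> bit mat \<Rightarrow> nat \<Rightarrow> nat \<Rightarrow> bit mat \<Rightarrow> bool" where
  "partially_reduced m R X j t C \<longleftrightarrow>
     C \<in> carrier_mat (dim_row X) (dim_col X) \<and>
     (\<forall>r < dim_row X. \<forall>c < dim_col X. c \<noteq> j \<longrightarrow> C $$ (r, c) = X $$ (r, c)) \<and>
     (\<exists>S \<subseteq> {s. s < j \<and> homogeneous m X s \<and> R (m s) (m j)}.
        \<forall>r < dim_row X. C $$ (r, j) = X $$ (r, j) + (\<Sum>s\<in>S. X $$ (r, s))) \<and>
     (\<forall>s < j. homogeneous m X s \<and> t \<le> low X s \<longrightarrow> C $$ (low X s, j) = 0)"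

lemma partially_reducedI:
  assumes X: "X \<in> carrier_mat n n" and "C \<in> carrier_mat n n"
    and "\<And>r c. r < n \<Longrightarrow> c < n \<Longrightarrow> c \<noteq> j \<Longrightarrow> C $$ (r, c) = X $$ (r, c)"
    and "S \<subseteq> {s. s < j \<and> homogeneous m X s \<and> R (m s) (m j)}"
    and "\<And>r. r < n \<Longrightarrow> C $$ (r, j) = X $$ (r, j) + (\<Sum>s\<in>S. X $$ (r, s))"
    and "\<And>s. s < j \<Longrightarrow> homogeneous m X s \<Longrightarrow> t \<le> low X s \<Longrightarrow> C $$ (low X s, j) = 0"
  shows "partially_reduced m R X j t C"
proof -
  have dims: "dim_row X = n" "dim_col X = n" using X by auto
  show ?thesis
    unfolding partially_reduced_def dims
    by (intro conjI allI impI exI[of _ S]) (use assms in auto)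
qed

lemma partially_reducedD:
  assumes "partially_reduced m R X j t C" and X: "X \<in> carrier_mat n n"
  shows "C \<in> carrier_mat n n"
    and "r < n \<Longrightarrow> c < n \<Longrightarrow> c \<noteq> j \<Longrightarrow> C $$ (r, c) = X $$ (r, c)"
    and "s < j \<Longrightarrow> homogeneous m X s \<Longrightarrow> t \<le> low X s \<Longrightarrow> C $$ (low X s, j) = 0"
  using assms unfolding partially_reduced_def by auto

lemma partially_reduced_sumE:
  assumes "partially_reduced m R X j t C" and X: "X \<in> carrier_mat n n"
  obtains S where "S \<subseteq> {s. s < j \<and> homogeneous m X s \<and> R (m s) (m j)}"
    and "\<And>r. r < n \<Longrightarrow> C $$ (r, j) = X $$ (r, j) + (\<Sum>s\<in>S. X $$ (r, s))"
proof -
  from assms(1) obtain S where "S \<subseteq> {s. s < j \<and> homogeneous m X s \<and> R (m s) (m j)}"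
    "\<forall>r < dim_row X. C $$ (r, j) = X $$ (r, j) + (\<Sum>s\<in>S. X $$ (r, s))"
    unfolding partially_reduced_def by blast
  then show ?thesis using X by (intro that[of S]) auto
qed

context
  fixes m :: "nat \<Rightarrow> 'p" and R :: "'p \<Rightarrow> 'p \<Rightarrow> bool" and n j :: nat and X :: "bit mat"
  assumes X_carrier: "X \<in> carrier_mat n n" and j_less: "j < n"
    and X_supported: "\<And>r s. r < n \<Longrightarrow> s \<le> j \<Longrightarrow> X $$ (r, s) \<noteq> 0 \<Longrightarrow> R (m r) (m s)"
    and R_trans: "transp_on (m ` {..<n}) R"
begin

lemma partially_reduced_supported:
  assumes C: "partially_reduced m R X j t C" and r: "r < n" and nz: "C $$ (r, j) \<noteq> 0"
  shows "R (m r) (m j)"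
proof -
  obtain S where S: "S \<subseteq> {s. s < j \<and> homogeneous m X s \<and> R (m s) (m j)}"
    and C_sum: "\<And>r. r < n \<Longrightarrow> C $$ (r, j) = X $$ (r, j) + (\<Sum>s\<in>S. X $$ (r, s))"
    using partially_reduced_sumE[OF C X_carrier] by blast
  note C_j = C_sum[OF r]
  show ?thesis
  proof (cases "X $$ (r, j) = 0")
    case True
    then have "(\<Sum>s\<in>S. X $$ (r, s)) \<noteq> 0" using C_j nz by simp
    then obtain s where s: "s \<in> S" "X $$ (r, s) \<noteq> 0" by (rule sum.not_neutral_contains_not_neutral)
    then have "R (m r) (m s)" "R (m s) (m j)" using S r j_less X_supported[of r s] by auto
    then show ?thesis
      by (rule transp_onD[OF R_trans, rotated 3]) (use s S r j_less in auto)
  qed (use X_supported r in auto)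
qed

lemma partially_reduced_add_col:
  assumes C: "partially_reduced m R X j (Suc i) C" and i: "i < n"
    and s0: "s0 < j" "homogeneous m X s0" "low X s0 = i" and C_ij: "C $$ (i, j) = 1"
  shows "partially_reduced m R X j i (add_col C s0 j)"
proof -
  note C_carrier = partially_reducedD(1)[OF C X_carrier]
    and C_off = partially_reducedD(2)[OF C X_carrier]
    and C_zero = partially_reducedD(3)[OF C X_carrier]
  obtain S where S: "S \<subseteq> {s. s < j \<and> homogeneous m X s \<and> R (m s) (m j)}"
    and C_j: "\<And>r. r < n \<Longrightarrow> C $$ (r, j) = X $$ (r, j) + (\<Sum>s\<in>S. X $$ (r, s))"
    using partially_reduced_sumE[OF C X_carrier] by blast
  let ?C = "add_col C s0 j"
  have X_is0: "X $$ (i, s0) = 1" using low_in_column(2)[of X s0] s0 unfolding homogeneous_def by simp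
  have "R (m i) (m j)" using partially_reduced_supported[OF C i] C_ij by simp
  then have R_s0: "R (m s0) (m j)" using s0 unfolding homogeneous_def by simp
  have new_j: "?C $$ (r, j) = C $$ (r, j) + X $$ (r, s0)" if "r < n" for r
    using that C_carrier j_less s0(1) C_off[of r s0] by (simp add: add_col_index)
  have "finite S" by (rule finite_subset[OF S]) simp
  show ?thesis
  proof (rule partially_reducedI[OF X_carrier, where S = "sym_diff S {s0}"])
    show "?C \<in> carrier_mat n n" using C_carrier unfolding carrier_mat_def by (simp add: add_col_index)
    show "?C $$ (r, c) = X $$ (r, c)" if "r < n" "c < n" "c \<noteq> j" for r c
      using that C_carrier C_off by (simp add: add_col_index)
    show "sym_diff S {s0} \<subseteq> {s. s < j \<and> homogeneous m X s \<and> R (m s) (m j)}"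
      using S s0 R_s0 by auto
    show "?C $$ (r, j) = X $$ (r, j) + (\<Sum>s\<in>sym_diff S {s0}. X $$ (r, s))" if r: "r < n" for r
    proof -
      have "?C $$ (r, j) = X $$ (r, j) + ((\<Sum>s\<in>S. X $$ (r, s)) + (\<Sum>s\<in>{s0}. X $$ (r, s)))"
        using new_j[OF r] C_j[OF r] by (simp add: add.assoc)
      then show ?thesis using sum_bit_symdiff[OF \<open>finite S\<close>, of "{s0}" "\<lambda>s. X $$ (r, s)"] by simp
    qed
    show "?C $$ (low X s, j) = 0" if "s < j" "homogeneous m X s" "i \<le> low X s" for s
    proof (cases "low X s = i")
      case True
      then show ?thesis using new_j[OF i] C_ij X_is0 by simp
    next
      case False
      have "low X s < n"
        using low_in_column(1)[of X s] that X_carrier unfolding homogeneous_def by simp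
      then show ?thesis
        using False new_j C_zero that zero_below_low[of X s0 "low X s"] s0 X_carrier by simp
    qed
  qed
qed

lemma conmat_step_partially_reduced:
  assumes C: "partially_reduced m R X j (Suc i) C" and i: "i < n"
  shows "partially_reduced m R X j i (conmat_step m j i C)"
proof -
  note C_carrier = partially_reducedD(1)[OF C X_carrier]
    and C_off = partially_reducedD(2)[OF C X_carrier]
    and C_zero = partially_reducedD(3)[OF C X_carrier]
  obtain S where S: "S \<subseteq> {s. s < j \<and> homogeneous m X s \<and> R (m s) (m j)}"
    and C_j: "\<And>r. r < n \<Longrightarrow> C $$ (r, j) = X $$ (r, j) + (\<Sum>s\<in>S. X $$ (r, s))"
    using partially_reduced_sumE[OF C X_carrier] by blast
  have same: "homogeneous m C s = homogeneous m X s \<and> low C s = low X s" if "s < j" for s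
    using column_cong[of C X s] C_off that j_less C_carrier X_carrier by auto
  show ?thesis
  proof (cases "C $$ (i, j) = 1 \<and> (\<exists>s < j. homogeneous m C s \<and> low C s = i)")
    case True
    define s0 where "s0 = (LEAST s. s < j \<and> homogeneous m C s \<and> low C s = i)"
    have "s0 < j \<and> homogeneous m C s0 \<and> low C s0 = i"
      using True unfolding s0_def by (metis (mono_tags, lifting) LeastI_ex)
    then have "partially_reduced m R X j i (add_col C s0 j)"
      using partially_reduced_add_col[OF C i] True same by auto
    then show ?thesis unfolding conmat_step_def s0_def using True by simp
  next
    case False
    have "C $$ (low X s, j) = 0" if "s < j" "homogeneous m X s" "i \<le> low X s" for s
    proof (cases "low X s = i")
      case True
      then have "C $$ (i, j) \<noteq> 1" using False that same by blast
      then show ?thesis using True by simp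
    qed (use that C_zero in simp)
    then have "partially_reduced m R X j i C"
      using C_off S C_j by (intro partially_reducedI[OF X_carrier C_carrier, where S = S]) auto
    then show ?thesis using False unfolding conmat_step_def by auto
  qed
qed

lemma fold_conmat_step_partially_reduced:
  "t \<le> n \<Longrightarrow> partially_reduced m R X j t C \<Longrightarrow>
     partially_reduced m R X j 0 (fold (conmat_step m j) (rev [0..<t]) C)"
proof (induction t arbitrary: C)
  case (Suc t)
  then show ?case using conmat_step_partially_reduced[OF Suc.prems(2)] by simp
qed simp

lemma conmat_col_partially_reduced: "partially_reduced m R X j 0 (conmat_col m j X)"
proof -
  define t where "t = (if nz_col X j then Suc (low X j) else 0)"
  have "X $$ (low X s, j) = 0" if "s < j" "homogeneous m X s" "t \<le> low X s" for s
  proof -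
    have "low X s < n"
      using low_in_column(1)[of X s] that X_carrier unfolding homogeneous_def by simp
    then show ?thesis
      using that zero_below_low[of X j] X_carrier unfolding t_def nz_col_def by (auto split: if_splits)
  qed
  then have init: "partially_reduced m R X j t X"
    using X_carrier by (intro partially_reducedI[of X n, where S = "{}"]) auto
  have "t \<le> n" using low_in_column(1)[of X j] X_carrier unfolding t_def by auto
  moreover have "conmat_col m j X = fold (conmat_step m j) (rev [0..<t]) X"
    unfolding conmat_col_def t_def by simp
  ultimately show ?thesis using fold_conmat_step_partially_reduced[OF _ init] by simp
qed

end

definition reduced_column ::
  "(nat \<Rightarrow> 'p) \<Rightarrow> ('p \<Rightarrow> 'p \<Rightarrow> bool) \<Rightarrow> bit mat \<Rightarrow> bit mat \<Rightarrow> nat \<Rightarrow> bool" where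
  "reduced_column m R A B j \<longleftrightarrow>
     (\<exists>S \<subseteq> {s. s < j \<and> homogeneous m B s \<and> R (m s) (m j)}.
        \<forall>r < dim_row B. B $$ (r, j) = A $$ (r, j) + (\<Sum>s\<in>S. B $$ (r, s))) \<and>
     (\<forall>s < j. homogeneous m B s \<longrightarrow> B $$ (low B s, j) = 0)"

definition reduced_form :: "(nat \<Rightarrow> 'p) \<Rightarrow> ('p \<Rightarrow> 'p \<Rightarrow> bool) \<Rightarrow> bit mat \<Rightarrow> bit mat \<Rightarrow> bool" where
  "reduced_form m R A B \<longleftrightarrow>
     B \<in> carrier_mat (dim_row A) (dim_col A) \<and> (\<forall>j < dim_col A. reduced_column m R A B j)"

lemma reduced_columnI:
  assumes "S \<subseteq> {s. s < j \<and> homogeneous m B s \<and> R (m s) (m j)}"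
    and "\<And>r. r < dim_row B \<Longrightarrow> B $$ (r, j) = A $$ (r, j) + (\<Sum>s\<in>S. B $$ (r, s))"
    and "\<And>s. s < j \<Longrightarrow> homogeneous m B s \<Longrightarrow> B $$ (low B s, j) = 0"
  shows "reduced_column m R A B j"
  unfolding reduced_column_def using assms by blast

lemma reduced_column_zero:
  "reduced_column m R A B j \<Longrightarrow> s < j \<Longrightarrow> homogeneous m B s \<Longrightarrow> B $$ (low B s, j) = 0"
  unfolding reduced_column_def by blast

lemma reduced_column_sumE:
  assumes "reduced_column m R A B j" and "dim_row B = n"
  obtains S where "S \<subseteq> {s. s < j \<and> homogeneous m B s \<and> R (m s) (m j)}"
    and "\<And>r. r < n \<Longrightarrow> B $$ (r, j) = A $$ (r, j) + (\<Sum>s\<in>S. B $$ (r, s))"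
proof -
  from assms(1) obtain S where "S \<subseteq> {s. s < j \<and> homogeneous m B s \<and> R (m s) (m j)}"
    "\<forall>r < dim_row B. B $$ (r, j) = A $$ (r, j) + (\<Sum>s\<in>S. B $$ (r, s))"
    unfolding reduced_column_def by blast
  then show ?thesis using assms(2) by (intro that[of S]) auto
qed

lemma reduced_formD:
  assumes "reduced_form m R A B"
  shows "B \<in> carrier_mat (dim_row A) (dim_col A)" "j < dim_col A \<Longrightarrow> reduced_column m R A B j"
  using assms unfolding reduced_form_def by blast+

lemma reduced_column_cong:
  assumes B: "reduced_column m R A B j" and dims: "dim_row C = dim_row B"
    and cols: "\<And>r s. r < dim_row B \<Longrightarrow> s \<le> j \<Longrightarrow> C $$ (r, s) = B $$ (r, s)"
  shows "reduced_column m R A C j"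
proof -
  obtain S where S: "S \<subseteq> {s. s < j \<and> homogeneous m B s \<and> R (m s) (m j)}"
    and B_j: "\<And>r. r < dim_row B \<Longrightarrow> B $$ (r, j) = A $$ (r, j) + (\<Sum>s\<in>S. B $$ (r, s))"
    using reduced_column_sumE[OF B refl] by blast
  note B_zero = reduced_column_zero[OF B]
  have same: "homogeneous m C s = homogeneous m B s" "low C s = low B s" if "s < j" for s
    using column_cong[of C B s] dims cols that by auto
  show ?thesis
  proof (rule reduced_columnI)
    show "S \<subseteq> {s. s < j \<and> homogeneous m C s \<and> R (m s) (m j)}" using S same by auto
    show "C $$ (r, j) = A $$ (r, j) + (\<Sum>s\<in>S. C $$ (r, s))" if "r < dim_row C" for r
      using B_j[of r] cols that dims S by (auto intro!: sum.cong)
    show "C $$ (low C s, j) = 0" if "s < j" "homogeneous m C s" for s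
    proof -
      have "low B s < dim_row B"
        using low_in_column(1)[of B s] that same unfolding homogeneous_def by simp
      then show ?thesis using B_zero[of s] cols that same by simp
    qed
  qed
qed

lemma partially_reduced_imp_reduced_column:
  assumes C: "partially_reduced m R X j 0 C" and X: "X \<in> carrier_mat n n" and j: "j < n"
    and X_j: "\<And>r. r < n \<Longrightarrow> X $$ (r, j) = A $$ (r, j)"
  shows "reduced_column m R A C j"
proof -
  note C_carrier = partially_reducedD(1)[OF C X] and C_off = partially_reducedD(2)[OF C X]
  have C_zero: "C $$ (low X s, j) = 0" if "s < j" "homogeneous m X s" for s
    using partially_reducedD(3)[OF C X that] by simp
  obtain S where S: "S \<subseteq> {s. s < j \<and> homogeneous m X s \<and> R (m s) (m j)}"
    and C_j: "\<And>r. r < n \<Longrightarrow> C $$ (r, j) = X $$ (r, j) + (\<Sum>s\<in>S. X $$ (r, s))"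
    using partially_reduced_sumE[OF C X] by blast
  have same: "homogeneous m C s = homogeneous m X s" "low C s = low X s" if "s < j" for s
    using column_cong[of C X s] C_off that j C_carrier X by auto
  show ?thesis
  proof (rule reduced_columnI)
    show "S \<subseteq> {s. s < j \<and> homogeneous m C s \<and> R (m s) (m j)}" using S same by auto
    show "C $$ (r, j) = A $$ (r, j) + (\<Sum>s\<in>S. C $$ (r, s))" if "r < dim_row C" for r
      using that C_carrier C_j X_j S C_off j by (auto intro!: sum.cong)
    show "C $$ (low C s, j) = 0" if "s < j" "homogeneous m C s" for s
      using that same C_zero by simp
  qed
qed

context
  fixes m :: "nat \<Rightarrow> 'p" and R :: "'p \<Rightarrow> 'p \<Rightarrow> bool" and n :: nat and A :: "bit mat"
  assumes A_carrier: "A \<in> carrier_mat n n" and A_respects: "respects_order m R A"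
    and R_trans: "transp_on (m ` {..<n}) R"
begin

lemma reduced_columns_supported:
  assumes B: "B \<in> carrier_mat n n" and red: "\<And>j. j < k \<Longrightarrow> reduced_column m R A B j"
    and k: "k \<le> n"
  shows "j < k \<Longrightarrow> r < n \<Longrightarrow> B $$ (r, j) \<noteq> 0 \<Longrightarrow> R (m r) (m j)"
proof (induction j arbitrary: r rule: less_induct)
  case (less j)
  obtain S where S: "S \<subseteq> {s. s < j \<and> homogeneous m B s \<and> R (m s) (m j)}"
    and B_sum: "\<And>r. r < n \<Longrightarrow> B $$ (r, j) = A $$ (r, j) + (\<Sum>s\<in>S. B $$ (r, s))"
    using reduced_column_sumE[OF red[OF less.prems(1)] carrier_matD(1)[OF B]] by blast
  note B_j = B_sum[OF less.prems(2)]
  show ?case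
  proof (cases "A $$ (r, j) = 0")
    case True
    then have "(\<Sum>s\<in>S. B $$ (r, s)) \<noteq> 0" using B_j less.prems(3) by simp
    then obtain s where s: "s \<in> S" "B $$ (r, s) \<noteq> 0" by (rule sum.not_neutral_contains_not_neutral)
    then have "R (m r) (m s)" "R (m s) (m j)" using S less by auto
    then show ?thesis
      by (rule transp_onD[OF R_trans, rotated 3]) (use s S less k in auto)
  next
    case False
    then show ?thesis
      using respects_orderD[OF A_respects A_carrier] less.prems k by auto
  qed
qed

lemma fold_conmat_col_reduced:
  assumes "k \<le> n"
  shows "fold (conmat_col m) [0..<k] A \<in> carrier_mat n n \<and>
    (\<forall>r < n. \<forall>c < n. k \<le> c \<longrightarrow> fold (conmat_col m) [0..<k] A $$ (r, c) = A $$ (r, c)) \<and>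
    (\<forall>j < k. reduced_column m R A (fold (conmat_col m) [0..<k] A) j)"
  using assms
proof (induction k)
  case 0
  then show ?case using A_carrier by simp
next
  case (Suc k)
  define B where "B = fold (conmat_col m) [0..<k] A"
  define Y where "Y = conmat_col m k B"
  from Suc B_def have B: "B \<in> carrier_mat n n"
    and B_A: "\<And>r c. r < n \<Longrightarrow> c < n \<Longrightarrow> k \<le> c \<Longrightarrow> B $$ (r, c) = A $$ (r, c)"
    and B_red: "\<And>j. j < k \<Longrightarrow> reduced_column m R A B j"
    by auto
  have B_supported: "R (m r) (m s)" if "r < n" "s \<le> k" "B $$ (r, s) \<noteq> 0" for r s
  proof (cases "s = k")
    case True
    then show ?thesis
      using that B_A respects_orderD[OF A_respects A_carrier] Suc.prems by auto
  qed (use reduced_columns_supported[OF B B_red] that Suc.prems in auto)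
  have Y: "partially_reduced m R B k 0 Y"
    unfolding Y_def using B_supported Suc.prems
    by (intro conmat_col_partially_reduced[OF B _ _ R_trans]) auto
  note Y_carrier = partially_reducedD(1)[OF Y B] and Y_off = partially_reducedD(2)[OF Y B]
  have "reduced_column m R A Y j" if "j < Suc k" for j
  proof (cases "j = k")
    case True
    then show ?thesis
      using partially_reduced_imp_reduced_column[OF Y B] B_A Suc.prems by auto
  next
    case False
    then show ?thesis
      using reduced_column_cong[OF B_red, of j Y] that Y_carrier B Y_off Suc.prems by auto
  qed
  moreover have "fold (conmat_col m) [0..<Suc k] A = Y" unfolding Y_def B_def by simp
  ultimately show ?case using Y_carrier Y_off B_A by auto
qed

lemma conmat_reduce_reduced_form: "reduced_form m R A (conmat_reduce m A)"
  using fold_conmat_col_reduced[of n] A_carrier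
  unfolding reduced_form_def conmat_reduce_def by auto

lemma reduced_form_respects_order:
  assumes "reduced_form m R A B"
  shows "respects_order m R B"
proof -
  have "B \<in> carrier_mat n n" using reduced_formD(1)[OF assms] A_carrier by simp
  then show ?thesis
    using reduced_columns_supported[of B n] reduced_formD(2)[OF assms] A_carrier
    unfolding respects_order_def by auto
qed

end

section \<open>Uniqueness of the reduced form\<close>

lemma reduced_lows_inj:
  assumes red: "\<And>j. j < k \<Longrightarrow> reduced_column m R A B j"
  shows "inj_on (low B) {s. s < k \<and> homogeneous m B s}"
proof (rule inj_onI)
  have distinct: "low B s \<noteq> low B s'" if "s < s'" "s' < k" "homogeneous m B s" "homogeneous m B s'" for s s'
  proof -
    have "B $$ (low B s, s') = 0" using reduced_column_zero[OF red[of s']] that by simp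
    moreover have "B $$ (low B s', s') = 1"
      using low_in_column(2) that unfolding homogeneous_def by auto
    ultimately show ?thesis by auto
  qed
  show "s = s'" if "s \<in> {s. s < k \<and> homogeneous m B s}" "s' \<in> {s. s < k \<and> homogeneous m B s}"
    "low B s = low B s'" for s s'
    using that distinct[of s s'] distinct[of s' s] by (cases s s' rule: linorder_cases) auto
qed

lemma sum_columns_at_max_low:
  assumes U: "finite U" "U \<noteq> {}" and nz: "\<And>s. s \<in> U \<Longrightarrow> nz_col B s" and inj: "inj_on (low B) U"
  shows "(\<Sum>s\<in>U. B $$ (Max (low B ` U), s)) = 1"
proof -
  define l where "l = Max (low B ` U)"
  have "l \<in> low B ` U" unfolding l_def using U by (intro Max_in) auto
  then obtain s0 where s0: "s0 \<in> U" "low B s0 = l" by auto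
  have l: "l < dim_row B" "B $$ (l, s0) = 1" using low_in_column[OF nz[OF s0(1)]] s0 by auto
  have "B $$ (l, s) = 0" if "s \<in> U - {s0}" for s
  proof -
    have "low B s \<le> l" unfolding l_def using U that by simp
    moreover have "low B s \<noteq> l" using inj s0 that by (auto dest: inj_onD)
    ultimately show ?thesis using zero_below_low l by simp
  qed
  then have "(\<Sum>s\<in>U. B $$ (l, s)) = B $$ (l, s0)"
    using U s0 by (simp add: sum.remove)
  then show ?thesis using l unfolding l_def by simp
qed

lemma reduced_column_unique:
  assumes B: "dim_row B = n" and inj: "inj_on (low B) {s. s < j \<and> homogeneous m B s}"
    and S: "S \<subseteq> {s. s < j \<and> homogeneous m B s}" and T: "T \<subseteq> {s. s < j \<and> homogeneous m B s}"
    and v: "\<And>r. r < n \<Longrightarrow> v r = a r + (\<Sum>s\<in>S. B $$ (r, s))"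
    and w: "\<And>r. r < n \<Longrightarrow> w r = a r + (\<Sum>s\<in>T. B $$ (r, s))"
    and v_zero: "\<And>s. s < j \<Longrightarrow> homogeneous m B s \<Longrightarrow> v (low B s) = 0"
    and w_zero: "\<And>s. s < j \<Longrightarrow> homogeneous m B s \<Longrightarrow> w (low B s) = 0"
    and r: "r < n"
  shows "v r = w r"
proof -
  define U where "U = sym_diff S T"
  have fin: "finite S" "finite T" by (rule finite_subset[OF S], simp, rule finite_subset[OF T], simp)
  then have U_fin: "finite U" unfolding U_def by simp
  have U_sub: "U \<subseteq> {s. s < j \<and> homogeneous m B s}" using S T unfolding U_def by auto
  have vw: "v q + w q = (\<Sum>s\<in>U. B $$ (q, s))" if "q < n" for q
  proof -
    have "v q + w q = (\<Sum>s\<in>S. B $$ (q, s)) + (\<Sum>s\<in>T. B $$ (q, s))"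
      using v[OF that] w[OF that] by (simp only: bit_add_cancel_left)
    then show ?thesis unfolding U_def using sum_bit_symdiff[OF fin] by simp
  qed
  have "U = {}"
  proof (rule ccontr)
    assume "U \<noteq> {}"
    define l where "l = Max (low B ` U)"
    have "l \<in> low B ` U" unfolding l_def using U_fin \<open>U \<noteq> {}\<close> by (intro Max_in) auto
    then obtain s where s: "s \<in> U" "low B s = l" by auto
    have hom: "s < j" "homogeneous m B s" using s U_sub by auto
    then have "l < n" using low_in_column(1)[of B s] s B unfolding homogeneous_def by simp
    moreover have "(\<Sum>s\<in>U. B $$ (l, s)) = 1"
      unfolding l_def using U_fin \<open>U \<noteq> {}\<close> U_sub inj
      by (intro sum_columns_at_max_low) (auto simp: homogeneous_def intro: inj_on_subset)
    ultimately have "v l + w l = 1" using vw by simp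
    then show False using v_zero[OF hom] w_zero[OF hom] s by simp
  qed
  then have "v r + w r = 0" using vw[OF r] by simp
  then show ?thesis by (simp only: bit_add_eq_0_iff)
qed

lemma reduced_form_unique:
  assumes B: "reduced_form m R A B" and C: "reduced_form m R A C"
  shows "B = C"
proof -
  have B_carrier: "B \<in> carrier_mat (dim_row A) (dim_col A)"
    and C_carrier: "C \<in> carrier_mat (dim_row A) (dim_col A)"
    using reduced_formD(1) B C by auto
  have "\<forall>r < dim_row A. B $$ (r, j) = C $$ (r, j)" if "j < dim_col A" for j
    using that
  proof (induction j rule: less_induct)
    case (less j)
    have cols: "C $$ (r, s) = B $$ (r, s)" if "s < j" "r < dim_row A" for r s
      using less.IH[of s] less.prems that by simp
    have same: "homogeneous m C s = homogeneous m B s" "low C s = low B s" if "s < j" for s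
      using column_cong[of C B s] cols that B_carrier C_carrier by auto
    note B_red = reduced_formD(2)[OF B less.prems] and C_red = reduced_formD(2)[OF C less.prems]
    obtain S where S: "S \<subseteq> {s. s < j \<and> homogeneous m B s \<and> R (m s) (m j)}"
      and B_j: "\<And>r. r < dim_row A \<Longrightarrow> B $$ (r, j) = A $$ (r, j) + (\<Sum>s\<in>S. B $$ (r, s))"
      using reduced_column_sumE[OF B_red carrier_matD(1)[OF B_carrier]] by blast
    obtain T where T: "T \<subseteq> {s. s < j \<and> homogeneous m C s \<and> R (m s) (m j)}"
      and C_j: "\<And>r. r < dim_row A \<Longrightarrow> C $$ (r, j) = A $$ (r, j) + (\<Sum>s\<in>T. C $$ (r, s))"
      using reduced_column_sumE[OF C_red carrier_matD(1)[OF C_carrier]] by blast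
    note B_zero = reduced_column_zero[OF B_red] and C_zero = reduced_column_zero[OF C_red]
    have C_j': "C $$ (r, j) = A $$ (r, j) + (\<Sum>s\<in>T. B $$ (r, s))" if "r < dim_row A" for r
      using C_j[OF that] cols that T by (auto intro!: sum.cong)
    have inj: "inj_on (low B) {s. s < j \<and> homogeneous m B s}"
      using reduced_formD(2)[OF B] less.prems by (intro reduced_lows_inj[where R = R and A = A]) auto
    show ?case
    proof (intro allI impI)
      fix r assume "r < dim_row A"
      show "B $$ (r, j) = C $$ (r, j)"
        by (rule reduced_column_unique[OF _ inj, of "dim_row A" S T _ "\<lambda>r. A $$ (r, j)"])
          (use B_carrier S T same B_j C_j' B_zero C_zero \<open>r < dim_row A\<close> in auto)
    qed
  qed
  then show ?thesis using B_carrier C_carrier by (intro eq_matI) auto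
qed

section \<open>Permuting rows and columns\<close>

definition permute_mat :: "(nat \<Rightarrow> nat) \<Rightarrow> 'a mat \<Rightarrow> 'a mat" where
  "permute_mat \<pi> B = mat (dim_row B) (dim_col B) (\<lambda>(i, j). B $$ (\<pi> i, \<pi> j))"

lemma permute_mat_index [simp]:
  "i < dim_row B \<Longrightarrow> j < dim_col B \<Longrightarrow> permute_mat \<pi> B $$ (i, j) = B $$ (\<pi> i, \<pi> j)"
  "dim_row (permute_mat \<pi> B) = dim_row B" "dim_col (permute_mat \<pi> B) = dim_col B"
  unfolding permute_mat_def by simp_all

definition principal_submatrix :: "'a mat \<Rightarrow> nat set \<Rightarrow> 'a mat" where
  "principal_submatrix B J = mat (card J) (card J)
     (\<lambda>(a, b). B $$ (sorted_list_of_set J ! a, sorted_list_of_set J ! b))"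

definition unpaired_indices :: "(nat \<Rightarrow> 'p) \<Rightarrow> bit mat \<Rightarrow> nat set" where
  "unpaired_indices m B = {k. k < dim_col B \<and> \<not> homogeneous m B k \<and> \<not> targetable m B k}"

lemma conmat_eq_principal_submatrix:
  assumes "dim_col (conmat_reduce m A) = dim_col A"
  shows "conmat m A = principal_submatrix (conmat_reduce m A) (unpaired_indices m (conmat_reduce m A))"
  using assms unfolding conmat_def principal_submatrix_def unpaired_indices_def Let_def by simp

lemma principal_submatrix_permute:
  assumes J: "finite J" and \<pi>: "bij_betw \<pi> J' J"
    and B': "\<And>i j. i \<in> J' \<Longrightarrow> j \<in> J' \<Longrightarrow> B' $$ (i, j) = B $$ (\<pi> i, \<pi> j)"
  obtains \<sigma> where "\<sigma> permutes {..<card J}"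
    "principal_submatrix B' J' = permute_mat \<sigma> (principal_submatrix B J)"
proof -
  let ?js = "sorted_list_of_set J" and ?js' = "sorted_list_of_set J'"
  have J': "finite J'" "card J' = card J"
    using bij_betw_finite[OF \<pi>] bij_betw_same_card[OF \<pi>] J by auto
  have js: "bij_betw ((!) ?js) {..<card J} J" using J by (intro bij_betw_nth) auto
  have js': "bij_betw ((!) ?js') {..<card J} J'" using J' by (intro bij_betw_nth) auto
  define \<sigma> where "\<sigma> = inv_into {..<card J} ((!) ?js) \<circ> (\<pi> \<circ> (!) ?js')"
  have \<sigma>: "bij_betw \<sigma> {..<card J} {..<card J}"
    unfolding \<sigma>_def by (rule bij_betw_trans[OF bij_betw_trans[OF js' \<pi>] bij_betw_inv_into[OF js]])
  have js_\<sigma>: "?js ! \<sigma> a = \<pi> (?js' ! a)" if "a < card J" for a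
  proof -
    have "\<pi> (?js' ! a) \<in> J" using that js' \<pi> by (auto dest: bij_betwE)
    then show ?thesis by (simp add: \<sigma>_def bij_betw_inv_into_right[OF js])
  qed
  show ?thesis
  proof
    show "restrict_id \<sigma> {..<card J} permutes {..<card J}" by (rule permutes_restrict_id[OF \<sigma>])
    show "principal_submatrix B' J' = permute_mat (restrict_id \<sigma> {..<card J}) (principal_submatrix B J)"
    proof (rule eq_matI)
      fix a b assume "a < dim_row (permute_mat (restrict_id \<sigma> {..<card J}) (principal_submatrix B J))"
        "b < dim_col (permute_mat (restrict_id \<sigma> {..<card J}) (principal_submatrix B J))"
      then have ab: "a < card J" "b < card J" by (simp_all add: principal_submatrix_def)
      then have "?js' ! a \<in> J'" "?js' ! b \<in> J'" "\<sigma> a < card J" "\<sigma> b < card J"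
        using js' \<sigma> by (auto dest: bij_betwE)
      then show "principal_submatrix B' J' $$ (a, b) =
          permute_mat (restrict_id \<sigma> {..<card J}) (principal_submatrix B J) $$ (a, b)"
        using ab J' B' js_\<sigma> by (simp add: principal_submatrix_def)
    qed (simp_all add: principal_submatrix_def J')
  qed
qed

lemma permutation_matrix_conjugate:
  fixes S :: "bit mat"
  assumes \<sigma>: "\<sigma> permutes {..<n}" and S: "S \<in> carrier_mat n n"
  defines "P \<equiv> mat n n (\<lambda>(i, j). if i = \<sigma> j then 1 else 0)"
  shows "permutation_matrix P" "P \<in> carrier_mat n n" "transpose_mat P * S * P = permute_mat \<sigma> S"
proof -
  show "permutation_matrix P" "P \<in> carrier_mat n n"
    unfolding permutation_matrix_def P_def using \<sigma> by (intro exI[of _ n] exI[of _ \<sigma>]) auto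
  have \<sigma>_less: "\<sigma> a < n" if "a < n" for a using permutes_in_image[OF \<sigma>] that by simp
  have left: "(transpose_mat P * S) $$ (a, c) = S $$ (\<sigma> a, c)" if "a < n" "c < n" for a c
  proof -
    have "(transpose_mat P * S) $$ (a, c) = (\<Sum>k = 0..<n. (if k = \<sigma> a then 1 else 0) * S $$ (k, c))"
      using that S unfolding P_def by (simp add: scalar_prod_def)
    also have "\<dots> = (\<Sum>k = 0..<n. if k = \<sigma> a then S $$ (k, c) else 0)" by (intro sum.cong) auto
    finally show ?thesis using \<sigma>_less[OF that(1)] by simp
  qed
  show "transpose_mat P * S * P = permute_mat \<sigma> S"
  proof (rule eq_matI)
    fix a b assume "a < dim_row (permute_mat \<sigma> S)" "b < dim_col (permute_mat \<sigma> S)"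
    then have ab: "a < n" "b < n" using S by auto
    have "(transpose_mat P * S * P) $$ (a, b) =
        (\<Sum>c = 0..<n. (transpose_mat P * S) $$ (a, c) * (if c = \<sigma> b then 1 else 0))"
      using ab S unfolding P_def by (simp add: scalar_prod_def)
    also have "\<dots> = (\<Sum>c = 0..<n. if c = \<sigma> b then S $$ (\<sigma> a, c) else 0)"
      using ab left by (intro sum.cong) auto
    finally show "(transpose_mat P * S * P) $$ (a, b) = permute_mat \<sigma> S $$ (a, b)"
      using \<sigma>_less[OF ab(2)] ab S by simp
  qed (use S in \<open>simp_all add: P_def\<close>)
qed

lemma homogeneous_transfer:
  assumes g: "bij_betw g {..<n} {..<n}" and X: "dim_row X = n" and Y: "dim_row Y = n"
    and col: "\<And>i. i < n \<Longrightarrow> Y $$ (i, t) = X $$ (g i, s)"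
    and X_supp: "\<And>r. r < n \<Longrightarrow> X $$ (r, s) \<noteq> 0 \<Longrightarrow> R (mX r) (mX s)"
    and mY: "\<And>i. i < n \<Longrightarrow> mY i = mX (g i)" and t: "t < n" "g t = s"
    and compat: "\<And>i j. i < n \<Longrightarrow> j < n \<Longrightarrow> R (mY i) (mY j) \<Longrightarrow> g i < g j \<longleftrightarrow> i < j"
    and hom: "homogeneous mX X s"
  shows "homogeneous mY Y t \<and> g (low Y t) = low X s"
proof -
  have low_X: "low X s < n" "X $$ (low X s, s) = 1" "mX (low X s) = mX s"
    using low_in_column[of X s] hom X unfolding homogeneous_def by auto
  define a where "a = inv_into {..<n} g (low X s)"
  have a: "a < n" "g a = low X s"
    unfolding a_def using low_X(1) g bij_betw_inv_into_right[OF g] bij_betw_inv_into[OF g]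
    by (auto dest: bij_betwE)
  have m_a: "mY a = mX s" using mY a low_X by simp
  have Y_a: "Y $$ (a, t) = 1" using col[OF a(1)] a low_X by simp
  have "i \<le> a" if i: "i < n" "Y $$ (i, t) \<noteq> 0" for i
  proof -
    have "X $$ (g i, s) \<noteq> 0" using col i by simp
    moreover have "g i < n" using g i by (auto dest: bij_betwE)
    ultimately have "R (mY i) (mY a)" "g i \<le> g a"
      using X_supp mY i m_a le_low[of "g i" X s] X a by auto
    moreover have "g i = g a \<Longrightarrow> i = a"
      using inj_onD[OF bij_betw_imp_inj_on[OF g], of i a] i a by simp
    ultimately show ?thesis using compat[OF i(1) a(1)] by linarith
  qed
  then have "low Y t = a" using low_eqI[of a Y t] Y a Y_a by simp
  moreover have "nz_col Y t" using Y_a a Y unfolding nz_col_def by auto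
  ultimately show ?thesis unfolding homogeneous_def using a m_a mY t by auto
qed

context
  fixes n :: nat and \<pi> :: "nat \<Rightarrow> nat" and m m' :: "nat \<Rightarrow> 'p" and R :: "'p \<Rightarrow> 'p \<Rightarrow> bool"
  assumes perm: "bij_betw \<pi> {..<n} {..<n}"
    and m'_eq: "\<And>i. i < n \<Longrightarrow> m' i = m (\<pi> i)"
    and perm_compat: "\<And>i j. i < n \<Longrightarrow> j < n \<Longrightarrow> R (m' i) (m' j) \<Longrightarrow> \<pi> i < \<pi> j \<longleftrightarrow> i < j"
begin

lemma perm_less: "i < n \<Longrightarrow> \<pi> i < n"
  using perm by (auto dest: bij_betwE)

lemma inv_perm:
  assumes "i < n"
  shows "inv_into {..<n} \<pi> i < n" "\<pi> (inv_into {..<n} \<pi> i) = i" "inv_into {..<n} \<pi> (\<pi> i) = i"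
  using assms bij_betw_inv_into[OF perm] bij_betw_inv_into_right[OF perm] bij_betw_inv_into_left[OF perm]
  by (auto dest: bij_betwE)

lemma inv_perm_compat:
  "i < n \<Longrightarrow> j < n \<Longrightarrow> R (m i) (m j) \<Longrightarrow> inv_into {..<n} \<pi> i < inv_into {..<n} \<pi> j \<longleftrightarrow> i < j"
  using perm_compat[of "inv_into {..<n} \<pi> i" "inv_into {..<n} \<pi> j"] m'_eq inv_perm by auto

lemma homogeneous_permute_mat:
  assumes B: "B \<in> carrier_mat n n" "respects_order m R B" and x: "x < n"
  shows "homogeneous m' (permute_mat \<pi> B) x \<longleftrightarrow> homogeneous m B (\<pi> x)"
    and "homogeneous m B (\<pi> x) \<Longrightarrow> \<pi> (low (permute_mat \<pi> B) x) = low B (\<pi> x)"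
proof -
  let ?C = "permute_mat \<pi> B"
  have forward: "homogeneous m' ?C x \<and> \<pi> (low ?C x) = low B (\<pi> x)" if "homogeneous m B (\<pi> x)"
    by (rule homogeneous_transfer[OF perm, where X = B and R = R and mX = m])
      (use B that x m'_eq perm_compat perm_less in \<open>auto simp: respects_order_def\<close>)
  have "homogeneous m B (\<pi> x)" if "homogeneous m' ?C x"
  proof -
    have "homogeneous m B (\<pi> x) \<and> inv_into {..<n} \<pi> (low B (\<pi> x)) = low ?C x"
      by (rule homogeneous_transfer[OF bij_betw_inv_into[OF perm], where X = ?C and R = R and mX = m'])
        (use B that x m'_eq inv_perm inv_perm_compat perm_less
          in \<open>auto simp: respects_order_def\<close>)
    then show ?thesis ..
  qed
  then show "homogeneous m' ?C x \<longleftrightarrow> homogeneous m B (\<pi> x)" using forward by blast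
  show "homogeneous m B (\<pi> x) \<Longrightarrow> \<pi> (low ?C x) = low B (\<pi> x)" using forward by blast
qed

lemma targetable_permute_mat:
  assumes B: "B \<in> carrier_mat n n" "respects_order m R B" and k: "k < n"
  shows "targetable m' (permute_mat \<pi> B) k \<longleftrightarrow> targetable m B (\<pi> k)"
proof
  assume "targetable m' (permute_mat \<pi> B) k"
  then obtain j where "j < n" "homogeneous m' (permute_mat \<pi> B) j" "low (permute_mat \<pi> B) j = k"
    using B unfolding targetable_def by auto
  then show "targetable m B (\<pi> k)"
    using homogeneous_permute_mat[OF B] perm_less B unfolding targetable_def by force
next
  assume "targetable m B (\<pi> k)"
  then obtain j0 where j0: "j0 < n" "homogeneous m B j0" "low B j0 = \<pi> k"
    using B unfolding targetable_def by auto
  define j where "j = inv_into {..<n} \<pi> j0"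
  have j: "j < n" "\<pi> j = j0" unfolding j_def using inv_perm j0 by auto
  then have hom: "homogeneous m' (permute_mat \<pi> B) j" "\<pi> (low (permute_mat \<pi> B) j) = \<pi> k"
    using homogeneous_permute_mat[OF B j(1)] j0 by auto
  have "low (permute_mat \<pi> B) j < n"
    using low_in_column(1)[of "permute_mat \<pi> B" j] hom B unfolding homogeneous_def by simp
  then have "low (permute_mat \<pi> B) j = k"
    using hom(2) k inv_perm(3) by metis
  then show "targetable m' (permute_mat \<pi> B) k"
    using B j hom unfolding targetable_def by auto
qed

lemma permute_mat_zero_at_lows:
  assumes B: "B \<in> carrier_mat n n" "respects_order m R B" and j: "j < n"
    and B_zero: "\<And>s. s < \<pi> j \<Longrightarrow> homogeneous m B s \<Longrightarrow> B $$ (low B s, \<pi> j) = 0"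
    and x: "x < j" "homogeneous m' (permute_mat \<pi> B) x"
  shows "permute_mat \<pi> B $$ (low (permute_mat \<pi> B) x, j) = 0"
proof (rule ccontr)
  let ?C = "permute_mat \<pi> B"
  assume nz: "?C $$ (low ?C x, j) \<noteq> 0"
  have xn: "x < n" using x j by simp
  have hom: "homogeneous m B (\<pi> x)" "\<pi> (low ?C x) = low B (\<pi> x)"
    using homogeneous_permute_mat[OF B xn] x by auto
  have low_C: "low ?C x < n" "m' (low ?C x) = m' x"
    using low_in_column(1)[of ?C x] x B unfolding homogeneous_def by auto
  have B_nz: "B $$ (\<pi> (low ?C x), \<pi> j) \<noteq> 0" using nz low_C(1) B j by simp
  then have "R (m (\<pi> (low ?C x))) (m (\<pi> j))"
    using respects_orderD[OF B(2,1) perm_less[OF low_C(1)] perm_less[OF j]] by blast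
  then have "R (m' x) (m' j)" using m'_eq[OF low_C(1)] m'_eq[OF j] low_C(2) by simp
  then have "\<pi> x < \<pi> j" using perm_compat[OF xn j] x by simp
  then have "B $$ (low B (\<pi> x), \<pi> j) = 0" using B_zero hom by simp
  moreover have "B $$ (low B (\<pi> x), \<pi> j) \<noteq> 0" using B_nz hom(2) by simp
  ultimately show False by simp
qed

lemma reduced_column_permute_mat:
  assumes B: "B \<in> carrier_mat n n" "respects_order m R B" and A: "A \<in> carrier_mat n n"
    and j: "j < n" and red: "reduced_column m R A B (\<pi> j)"
  shows "reduced_column m' R (permute_mat \<pi> A) (permute_mat \<pi> B) j"
proof -
  let ?C = "permute_mat \<pi> B" and ?\<psi> = "inv_into {..<n} \<pi>"
  obtain S where S: "S \<subseteq> {s. s < \<pi> j \<and> homogeneous m B s \<and> R (m s) (m (\<pi> j))}"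
    and B_j: "\<And>r. r < n \<Longrightarrow> B $$ (r, \<pi> j) = A $$ (r, \<pi> j) + (\<Sum>s\<in>S. B $$ (r, s))"
    using reduced_column_sumE[OF red carrier_matD(1)[OF B(1)]] by blast
  note B_zero = reduced_column_zero[OF red]
  have S_n: "s < n" if "s \<in> S" for s using S that perm_less[OF j] by auto
  show ?thesis
  proof (rule reduced_columnI)
    show "?\<psi> ` S \<subseteq> {x. x < j \<and> homogeneous m' ?C x \<and> R (m' x) (m' j)}"
    proof
      fix x assume "x \<in> ?\<psi> ` S"
      then obtain s where s: "s \<in> S" "x = ?\<psi> s" by auto
      then have x: "x < n" "\<pi> x = s" using inv_perm S_n by auto
      then have "R (m' x) (m' j)" using S s m'_eq j by auto
      moreover have "x < j" using perm_compat[OF x(1) j calculation] x S s by auto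
      moreover have "homogeneous m' ?C x" using homogeneous_permute_mat(1)[OF B x(1)] x S s by auto
      ultimately show "x \<in> {x. x < j \<and> homogeneous m' ?C x \<and> R (m' x) (m' j)}" by simp
    qed
    show "?C $$ (r, j) = permute_mat \<pi> A $$ (r, j) + (\<Sum>x\<in>?\<psi> ` S. ?C $$ (r, x))"
      if "r < dim_row ?C" for r
    proof -
      have r: "r < n" using that B by simp
      have "inj_on ?\<psi> S" using inv_perm S_n by (metis inj_onI)
      then have "(\<Sum>x\<in>?\<psi> ` S. ?C $$ (r, x)) = (\<Sum>s\<in>S. B $$ (\<pi> r, s))"
        using B r S_n inv_perm by (simp add: sum.reindex)
      then show ?thesis using B_j[OF perm_less[OF r]] B A r j by simp
    qed
    show "?C $$ (low ?C x, j) = 0" if "x < j" "homogeneous m' ?C x" for x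
      by (rule permute_mat_zero_at_lows[OF B j B_zero that])
  qed
qed

lemma reduced_form_permute_mat:
  assumes A: "A \<in> carrier_mat n n" "respects_order m R A" "transp_on (m ` {..<n}) R"
    and B: "reduced_form m R A B"
  shows "reduced_form m' R (permute_mat \<pi> A) (permute_mat \<pi> B)"
proof -
  have B_carrier: "B \<in> carrier_mat n n" using reduced_formD(1)[OF B] A(1) by simp
  have "reduced_column m' R (permute_mat \<pi> A) (permute_mat \<pi> B) j" if "j < n" for j
  proof (rule reduced_column_permute_mat[OF B_carrier reduced_form_respects_order[OF A B] A(1) that])
    show "reduced_column m R A B (\<pi> j)" using reduced_formD(2)[OF B] perm_less[OF that] A(1) by simp
  qed
  then show ?thesis using B_carrier A(1) unfolding reduced_form_def by (auto intro!: carrier_matI)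
qed

lemma conmat_reduce_permute_mat:
  assumes A: "A \<in> carrier_mat n n" "respects_order m R A" "transp_on (m ` {..<n}) R"
  shows "conmat_reduce m' (permute_mat \<pi> A) = permute_mat \<pi> (conmat_reduce m A)"
proof (rule reduced_form_unique)
  have "m' ` {..<n} = m ` (\<pi> ` {..<n})"
    unfolding image_image using m'_eq by (intro image_cong) auto
  then have "transp_on (m' ` {..<n}) R" using A(3) bij_betw_imp_surj_on[OF perm] by simp
  moreover have "respects_order m' R (permute_mat \<pi> A)"
    unfolding respects_order_def
  proof (intro allI impI)
    fix i j assume "i < dim_row (permute_mat \<pi> A)" "j < dim_col (permute_mat \<pi> A)"
      and "permute_mat \<pi> A $$ (i, j) \<noteq> 0"
    then have "i < n" "j < n" "A $$ (\<pi> i, \<pi> j) \<noteq> 0" using A(1) by auto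
    then show "R (m' i) (m' j)" using respects_orderD[OF A(2,1)] perm_less m'_eq by simp
  qed
  moreover have "permute_mat \<pi> A \<in> carrier_mat n n" using A(1) by (auto intro!: carrier_matI)
  ultimately show "reduced_form m' R (permute_mat \<pi> A) (conmat_reduce m' (permute_mat \<pi> A))"
    by (intro conmat_reduce_reduced_form[where n = n])
  show "reduced_form m' R (permute_mat \<pi> A) (permute_mat \<pi> (conmat_reduce m A))"
    using reduced_form_permute_mat[OF A conmat_reduce_reduced_form[OF A]] .
qed

lemma unpaired_indices_permute_mat:
  assumes B: "B \<in> carrier_mat n n" "respects_order m R B"
  shows "bij_betw \<pi> (unpaired_indices m' (permute_mat \<pi> B)) (unpaired_indices m B)"
proof (rule bij_betw_subset[OF perm])
  have J'_eq: "unpaired_indices m' (permute_mat \<pi> B) = {k. k < n \<and> \<pi> k \<in> unpaired_indices m B}"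
    unfolding unpaired_indices_def
    using homogeneous_permute_mat(1)[OF B] targetable_permute_mat[OF B] perm_less B(1) by auto
  then show "unpaired_indices m' (permute_mat \<pi> B) \<subseteq> {..<n}" by auto
  show "\<pi> ` unpaired_indices m' (permute_mat \<pi> B) = unpaired_indices m B"
  proof
    show "\<pi> ` unpaired_indices m' (permute_mat \<pi> B) \<subseteq> unpaired_indices m B" unfolding J'_eq by auto
    show "unpaired_indices m B \<subseteq> \<pi> ` unpaired_indices m' (permute_mat \<pi> B)"
    proof
      fix j assume j: "j \<in> unpaired_indices m B"
      then have "j < n" using B(1) unfolding unpaired_indices_def by simp
      then show "j \<in> \<pi> ` unpaired_indices m' (permute_mat \<pi> B)"
        unfolding J'_eq using inv_perm[of j] j by (auto intro!: image_eqI[of _ _ "inv_into {..<n} \<pi> j"])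
    qed
  qed
qed

lemma conmat_permute_mat:
  assumes A: "A \<in> carrier_mat n n" "respects_order m R A" "transp_on (m ` {..<n}) R"
  shows "\<exists>P. permutation_matrix P \<and> P \<in> carrier_mat (dim_row (conmat m A)) (dim_row (conmat m A)) \<and>
           transpose_mat P * conmat m A * P = conmat m' (permute_mat \<pi> A)"
proof -
  define B where "B = conmat_reduce m A"
  define J where "J = unpaired_indices m B"
  have red: "reduced_form m R A B" unfolding B_def by (rule conmat_reduce_reduced_form[OF A])
  have B: "B \<in> carrier_mat n n" "respects_order m R B"
    using reduced_formD(1)[OF red] A(1) reduced_form_respects_order[OF A red] by auto
  obtain \<sigma> where \<sigma>: "\<sigma> permutes {..<card J}"
    and sub: "principal_submatrix (permute_mat \<pi> B) (unpaired_indices m' (permute_mat \<pi> B)) =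
      permute_mat \<sigma> (principal_submatrix B J)"
  proof (rule principal_submatrix_permute[OF _ unpaired_indices_permute_mat[OF B]])
    show "finite (unpaired_indices m B)" unfolding unpaired_indices_def by simp
    show "permute_mat \<pi> B $$ (i, j) = B $$ (\<pi> i, \<pi> j)"
      if "i \<in> unpaired_indices m' (permute_mat \<pi> B)" "j \<in> unpaired_indices m' (permute_mat \<pi> B)" for i j
      using that B(1) unfolding unpaired_indices_def by auto
  qed (simp add: J_def)
  have "conmat m A = principal_submatrix B J"
    using conmat_eq_principal_submatrix[of m A] A(1) B(1) unfolding B_def J_def by simp
  moreover have "conmat m' (permute_mat \<pi> A) =
      principal_submatrix (permute_mat \<pi> B) (unpaired_indices m' (permute_mat \<pi> B))"
    using conmat_eq_principal_submatrix[of m' "permute_mat \<pi> A"] A(1) B(1) conmat_reduce_permute_mat[OF A]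
    unfolding B_def by simp
  moreover have S: "principal_submatrix B J \<in> carrier_mat (card J) (card J)"
    by (simp add: principal_submatrix_def)
  ultimately show ?thesis
    unfolding sub carrier_matD(1)[OF S] using permutation_matrix_conjugate[OF \<sigma> S] by auto
qed

end

section \<open>Enumerations of a Morse decomposition\<close>

lemma morse_index_in:
  assumes md: "morse_decomposition K \<V> P leP M" and \<sigma>: "\<sigma> \<in> K"
  shows "morse_index P M \<sigma> \<in> P \<and> \<sigma> \<in> M (morse_index P M \<sigma>)"
proof -
  obtain p where p: "p \<in> P" "\<sigma> \<in> M p" using md \<sigma> unfolding morse_decomposition_def by blast
  have unique: "q = p" if "q \<in> P" "\<sigma> \<in> M q" for q
    using md p that unfolding morse_decomposition_def by blast
  have "morse_index P M \<sigma> = p"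
    unfolding morse_index_def by (rule the_equality) (use p unique in blast)+
  then show ?thesis using p by simp
qed

lemma enumeration_reindex:
  assumes e: "enumeration K e" and e': "enumeration K e'"
  obtains \<pi> where "bij_betw \<pi> {..<length e} {..<length e}" "length e' = length e"
    "\<And>k. k < length e \<Longrightarrow> e ! \<pi> k = e' ! k"
proof
  have len: "length e' = length e"
    using e e' distinct_card unfolding enumeration_def by metis
  have nth: "bij_betw ((!) e) {..<length e} K" "bij_betw ((!) e') {..<length e} K"
    using e e' len unfolding enumeration_def by (auto intro: bij_betw_nth)
  show "bij_betw (inv_into {..<length e} ((!) e) \<circ> (!) e') {..<length e} {..<length e}"
    by (intro bij_betw_trans[OF nth(2)] bij_betw_inv_into nth(1))
  show "length e' = length e" by (fact len)
  show "e ! (inv_into {..<length e} ((!) e) \<circ> (!) e') k = e' ! k" if "k < length e" for k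
  proof -
    have "e' ! k \<in> K" using nth(2) that by (auto dest: bij_betwE)
    then show ?thesis by (simp add: bij_betw_inv_into_right[OF nth(1)])
  qed
qed

lemma boundary_matrix_reindex:
  assumes "bij_betw \<pi> {..<length e} {..<length e}" "length e' = length e"
    "\<And>k. k < length e \<Longrightarrow> e ! \<pi> k = e' ! k"
  shows "boundary_matrix e' = permute_mat \<pi> (boundary_matrix e)"
  using assms by (intro eq_matI) (auto simp: boundary_matrix_def dest: bij_betwE)

context
  fixes K :: "'v set set" and \<V> :: "'v set set set" and P :: "'p set"
    and leP :: "'p \<Rightarrow> 'p \<Rightarrow> bool" and M :: "'p \<Rightarrow> 'v set set"
  assumes md: "morse_decomposition K \<V> P leP M"
begin

lemma boundary_matrix_respects_order:
  assumes "enumeration K e"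
  shows "respects_order (\<lambda>k. morse_index P M (e ! k)) leP (boundary_matrix e)"
  unfolding respects_order_def
proof (intro allI impI)
  fix i j assume ij: "i < dim_row (boundary_matrix e)" "j < dim_col (boundary_matrix e)"
    and "boundary_matrix e $$ (i, j) \<noteq> 0"
  then have "e ! i \<subseteq> e ! j" by (auto simp: boundary_matrix_def codim1_face_def split: if_splits)
  moreover have "e ! i \<in> K" "e ! j \<in> K"
    using assms ij unfolding enumeration_def boundary_matrix_def by auto
  ultimately have "is_path K \<V> [e ! j, e ! i]"
    unfolding is_path_def F_mv_def closure_sc_def by (auto simp: less_Suc_eq)
  then show "leP (morse_index P M (e ! i)) (morse_index P M (e ! j))"
    using md morse_index_in[OF md \<open>e ! i \<in> K\<close>] morse_index_in[OF md \<open>e ! j \<in> K\<close>]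
    unfolding morse_decomposition_def by (metis last.simps list.sel(1) list.distinct(1))
qed

lemma morse_index_transp:
  assumes "enumeration K e"
  shows "transp_on ((\<lambda>k. morse_index P M (e ! k)) ` {..<length e}) leP"
proof (rule transp_on_subset)
  show "transp_on P leP"
    using md unfolding morse_decomposition_def partial_order_pred_def transp_on_def by blast
  show "(\<lambda>k. morse_index P M (e ! k)) ` {..<length e} \<subseteq> P"
    using assms morse_index_in[OF md] unfolding enumeration_def by auto
qed

lemma admissible_enum_less:
  assumes e: "admissible_enum K P leP M e" and ij: "i < length e" "j < length e"
    and le: "leP (morse_index P M (e ! i)) (morse_index P M (e ! j))"
    and ne: "morse_index P M (e ! i) \<noteq> morse_index P M (e ! j)"
  shows "i < j"
proof (rule ccontr)
  assume "\<not> i < j"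
  obtain lin where lin: "linear_extension P leP lin"
    and mono: "\<And>i j. i \<le> j \<Longrightarrow> j < length e \<Longrightarrow>
       lin (morse_index P M (e ! i)) (morse_index P M (e ! j))"
    using e unfolding admissible_enum_def by blast
  have in_P: "morse_index P M (e ! i) \<in> P" "morse_index P M (e ! j) \<in> P"
    using e ij morse_index_in[OF md] unfolding admissible_enum_def enumeration_def by auto
  have "lin (morse_index P M (e ! j)) (morse_index P M (e ! i))"
    using mono \<open>\<not> i < j\<close> ij by simp
  moreover have "lin (morse_index P M (e ! i)) (morse_index P M (e ! j))"
    using lin le in_P unfolding linear_extension_def by blast
  ultimately show False
    using lin in_P ne unfolding linear_extension_def partial_order_pred_def by blast
qed

lemma morse_fixed_reindex_compat:
  assumes e: "admissible_enum K P leP M e" and e': "admissible_enum K P leP M e'"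
    and fixed: "morse_fixed P M e e'"
    and \<pi>: "bij_betw \<pi> {..<length e} {..<length e}" "length e' = length e"
      "\<And>k. k < length e \<Longrightarrow> e ! \<pi> k = e' ! k"
    and ij: "i < length e" "j < length e"
    and le: "leP (morse_index P M (e' ! i)) (morse_index P M (e' ! j))"
  shows "\<pi> i < \<pi> j \<longleftrightarrow> i < j"
proof (cases "morse_index P M (e' ! i) = morse_index P M (e' ! j)")
  case True
  have "e' ! i \<in> K" "e' ! j \<in> K" using e' ij \<pi>(2) unfolding admissible_enum_def enumeration_def by auto
  then have "e ! \<pi> i \<in> M (morse_index P M (e' ! i))" "e ! \<pi> j \<in> M (morse_index P M (e' ! i))"
    "morse_index P M (e' ! i) \<in> P"
    using morse_index_in[OF md, of "e' ! i"] morse_index_in[OF md, of "e' ! j"] True \<pi>(3) ij by auto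
  moreover have "\<pi> i < length e" "\<pi> j < length e" using \<pi>(1) ij by (auto dest: bij_betwE)
  ultimately show ?thesis
    using fixed[unfolded morse_fixed_def, rule_format, of "morse_index P M (e' ! i)" "\<pi> i" "\<pi> j" i j]
      \<pi> ij by auto
next
  case False
  have "\<pi> i < length e" "\<pi> j < length e" using \<pi>(1) ij by (auto dest: bij_betwE)
  then have "\<pi> i < \<pi> j" using admissible_enum_less[OF e] le False \<pi>(3) ij by simp
  moreover have "i < j" using admissible_enum_less[OF e'] le False ij \<pi>(2) by simp
  ultimately show ?thesis by simp
qed

end

theorem corollary1:
  fixes K :: "'v set set" and \<V> :: "'v set set set"
    and P :: "'p set" and leP :: "'p \<Rightarrow> 'p \<Rightarrow> bool" and M :: "'p \<Rightarrow> 'v set set"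
    and e e' :: "'v set list"
  assumes "simplicial_complex K"
    and "multivector_field K \<V>"
    and "morse_decomposition K \<V> P leP M"
    and "admissible_enum K P leP M e"
    and "admissible_enum K P leP M e'"
    and "morse_fixed P M e e'"
  shows "\<exists>R. permutation_matrix R \<and> R \<in> carrier_mat (dim_row (conmat_of_enum P M e)) (dim_row (conmat_of_enum P M e)) \<and>
             transpose_mat R * conmat_of_enum P M e * R = conmat_of_enum P M e'"
proof -
  note md = assms(3)
  have enum: "enumeration K e" "enumeration K e'"
    using assms(4,5) unfolding admissible_enum_def by auto
  obtain \<pi> where \<pi>: "bij_betw \<pi> {..<length e} {..<length e}" "length e' = length e"
    "\<And>k. k < length e \<Longrightarrow> e ! \<pi> k = e' ! k"
    using enumeration_reindex[OF enum] by blast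
  define m where "m = (\<lambda>k. morse_index P M (e ! k))"
  define m' where "m' = (\<lambda>k. morse_index P M (e' ! k))"
  have m'_eq: "m' k = m (\<pi> k)" if "k < length e" for k
    using \<pi>(3) that unfolding m_def m'_def by simp
  have compat: "\<pi> i < \<pi> j \<longleftrightarrow> i < j" if "i < length e" "j < length e" "leP (m' i) (m' j)" for i j
    using morse_fixed_reindex_compat[OF md assms(4-6) \<pi> that(1,2)] that(3) unfolding m'_def by simp
  have A: "boundary_matrix e \<in> carrier_mat (length e) (length e)"
    by (simp add: boundary_matrix_def)
  have respects: "respects_order m leP (boundary_matrix e)"
    unfolding m_def by (rule boundary_matrix_respects_order[OF md enum(1)])
  have trans: "transp_on (m ` {..<length e}) leP"
    unfolding m_def by (rule morse_index_transp[OF md enum(1)])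
  show ?thesis
    using conmat_permute_mat[OF \<pi>(1) m'_eq compat A respects trans]
    by (simp only: conmat_of_enum_def m_def m'_def boundary_matrix_reindex[OF \<pi>])
qed

end
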